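(* Let $G$ be a quasi-regular mixed lattice group. (a) Let $u,v_1,v_2\in G$ with $0\preceq u$, $0\le v_1$, $0\preceq v_2$ and $u\le v_1+v_2$. Then there exist $u_1,u_2\in G$ with $0\le u_1\le v_1$, $0\preceq u_2\le v_2$ and $u=u_1+u_2$. Moreover, if $0\preceq v_1$ then $0\preceq u_1$, and if $u\preceq v_1+v_2$ then $u_2\preceq v_2$. (b) Let $u,v_1,v_2\in G$ with $0\le u$, $0\preceq v_1$, $0\le v_2$ and $u\preceq v_1+v_2$. Then there exist $u_1,u_2\in G$ with $0\le u_1\preceq v_1$, $0\le u_2\le v_2$ and $u=u_1+u_2$. Moreover, if $0\preceq u$ then $0\preceq u_1$.
   Context: A mixed lattice group is a commutative group $G$ with two translation-invariant partial orderings $\le$ (initial order) and $\preceq$ (specific order) such that for all $x,y\in G$ the mixed lower envelope $x\curlywedge y=\max\{w: w\preceq x,\ w\le y\}$ and the mixed upper envelope $x\curlyvee y=\min\{w: x\preceq w,\ y\le w\}$ exist (max/min with respect to $\le$). $G$ is quasi-regular if $G_{sp}=\{x: 0\preceq x\}$ is closed under $\curlywedge$ and $\curlyvee$. *)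

theory Defs
  imports Main
begin

definition inv_partial_order :: "('a::ab_group_add \<Rightarrow> 'a \<Rightarrow> bool) \<Rightarrow> bool" where
  "inv_partial_order r \<longleftrightarrow>
     (\<forall>x. r x x) \<and> (\<forall>x y. r x y \<longrightarrow> r y x \<longrightarrow> x = y) \<and>
     (\<forall>x y z. r x y \<longrightarrow> r y z \<longrightarrow> r x z) \<and>
     (\<forall>x y z. r x y \<longrightarrow> r (x + z) (y + z))"

definition is_mixed_lower :: "('a \<Rightarrow> 'a \<Rightarrow> bool) \<Rightarrow> ('a \<Rightarrow> 'a \<Rightarrow> bool) \<Rightarrow> 'a \<Rightarrow> 'a \<Rightarrow> 'a \<Rightarrow> bool" where
  "is_mixed_lower le sp x y w \<longleftrightarrow> sp w x \<and> le w y \<and> (\<forall>z. sp z x \<and> le z y \<longrightarrow> le z w)"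

definition is_mixed_upper :: "('a \<Rightarrow> 'a \<Rightarrow> bool) \<Rightarrow> ('a \<Rightarrow> 'a \<Rightarrow> bool) \<Rightarrow> 'a \<Rightarrow> 'a \<Rightarrow> 'a \<Rightarrow> bool" where
  "is_mixed_upper le sp x y w \<longleftrightarrow> sp x w \<and> le y w \<and> (\<forall>z. sp x z \<and> le y z \<longrightarrow> le w z)"

definition mixed_lower :: "('a \<Rightarrow> 'a \<Rightarrow> bool) \<Rightarrow> ('a \<Rightarrow> 'a \<Rightarrow> bool) \<Rightarrow> 'a \<Rightarrow> 'a \<Rightarrow> 'a" where
  "mixed_lower le sp x y = (THE w. is_mixed_lower le sp x y w)"

definition mixed_upper :: "('a \<Rightarrow> 'a \<Rightarrow> bool) \<Rightarrow> ('a \<Rightarrow> 'a \<Rightarrow> bool) \<Rightarrow> 'a \<Rightarrow> 'a \<Rightarrow> 'a" where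
  "mixed_upper le sp x y = (THE w. is_mixed_upper le sp x y w)"

text \<open>Mixed lattice group: the carrier is the whole type (a commutative group), le is the
  initial order, sp the specific order.\<close>
definition mixed_lattice_group :: "('a::ab_group_add \<Rightarrow> 'a \<Rightarrow> bool) \<Rightarrow> ('a \<Rightarrow> 'a \<Rightarrow> bool) \<Rightarrow> bool" where
  "mixed_lattice_group le sp \<longleftrightarrow> inv_partial_order le \<and> inv_partial_order sp \<and>
     (\<forall>x y. \<exists>w. is_mixed_lower le sp x y w) \<and> (\<forall>x y. \<exists>w. is_mixed_upper le sp x y w)"

definition quasi_regular :: "('a::ab_group_add \<Rightarrow> 'a \<Rightarrow> bool) \<Rightarrow> ('a \<Rightarrow> 'a \<Rightarrow> bool) \<Rightarrow> bool" where
  "quasi_regular le sp \<longleftrightarrow> mixed_lattice_group le sp \<and>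
     (\<forall>x y. sp 0 x \<longrightarrow> sp 0 y \<longrightarrow> sp 0 (mixed_lower le sp x y) \<and> sp 0 (mixed_upper le sp x y))"

end

theory Submission
  imports Defs
begin

text \<open>Both decompositions take \<open>u\<^sub>1\<close> to be a mixed lower envelope, \<open>u \<curlywedge> v\<^sub>1\<close> in (a) and
  \<open>v\<^sub>1 \<curlywedge> u\<close> in (b), and \<open>u\<^sub>2 = u - u\<^sub>1\<close>. The bound \<open>u\<^sub>2 \<le> v\<^sub>2\<close> holds because \<open>u - v\<^sub>2\<close> is one
  of the competitors whose maximum defines the envelope. The positivity claims for \<open>\<preceq>\<close> come
  from quasi-regularity, in (a) applied to \<open>v\<^sub>2 \<curlywedge> (v\<^sub>1 + v\<^sub>2 - u)\<close>, which is the translate of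
  \<open>u \<curlywedge> v\<^sub>1\<close> by \<open>v\<^sub>2 - u\<close>.\<close>

lemma inv_partial_order_translate:
  assumes "inv_partial_order r" "r a b" "b' - a' = b - a"
  shows "r a' b'"
proof -
  have "r (a + (a' - a)) (b + (a' - a))"
    using assms(1,2) unfolding inv_partial_order_def by blast
  moreover have "b + (a' - a) = b'"
    using assms(3) by (metis add.commute diff_add_cancel diff_diff_eq2)
  ultimately show ?thesis by simp
qed

lemma inv_partial_order_antisym: "inv_partial_order r \<Longrightarrow> r x y \<Longrightarrow> r y x \<Longrightarrow> x = y"
  unfolding inv_partial_order_def by blast

lemma mixed_lattice_group_orders:
  assumes "mixed_lattice_group le sp"
  shows "inv_partial_order le" "inv_partial_order sp"
  using assms unfolding mixed_lattice_group_def by blast+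

lemma mixed_lower_eqI:
  assumes "inv_partial_order le" "is_mixed_lower le sp x y w"
  shows "mixed_lower le sp x y = w"
  unfolding mixed_lower_def
proof (rule the_equality)
  show "is_mixed_lower le sp x y w" by fact
  show "w' = w" if "is_mixed_lower le sp x y w'" for w'
    using that assms inv_partial_order_antisym[OF assms(1)] unfolding is_mixed_lower_def by blast
qed

lemma is_mixed_lower_mixed_lower:
  assumes "mixed_lattice_group le sp"
  shows "is_mixed_lower le sp x y (mixed_lower le sp x y)"
proof -
  obtain w where "is_mixed_lower le sp x y w"
    using assms unfolding mixed_lattice_group_def by blast
  with mixed_lower_eqI mixed_lattice_group_orders(1)[OF assms] show ?thesis by metis
qed

lemma mixed_lower_translate:
  assumes G: "mixed_lattice_group le sp"
  shows "mixed_lower le sp (x + t) (y + t) = mixed_lower le sp x y + t"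
proof -
  note le = mixed_lattice_group_orders(1)[OF G] and sp = mixed_lattice_group_orders(2)[OF G]
  define m where "m = mixed_lower le sp x y"
  have m: "sp m x" "le m y" "\<And>z. sp z x \<Longrightarrow> le z y \<Longrightarrow> le z m"
    using is_mixed_lower_mixed_lower[OF G, of x y] unfolding m_def is_mixed_lower_def by blast+
  have "is_mixed_lower le sp (x + t) (y + t) (m + t)"
    unfolding is_mixed_lower_def
  proof (intro conjI allI impI)
    show "sp (m + t) (x + t)" using inv_partial_order_translate[OF sp m(1)] by simp
    show "le (m + t) (y + t)" using inv_partial_order_translate[OF le m(2)] by simp
    fix z assume z: "sp z (x + t) \<and> le z (y + t)"
    then have "le (z - t) m"
      using m(3) inv_partial_order_translate[OF sp] inv_partial_order_translate[OF le] by force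
    then show "le z (m + t)" using inv_partial_order_translate[OF le] by force
  qed
  then show ?thesis using mixed_lower_eqI[OF le] m_def by simp
qed

lemma quasi_regular_sp_nonneg_mixed_lower:
  "quasi_regular le sp \<Longrightarrow> sp 0 x \<Longrightarrow> sp 0 y \<Longrightarrow> sp 0 (mixed_lower le sp x y)"
  unfolding quasi_regular_def by blast

lemma riesz_decomposition_le:
  assumes G: "mixed_lattice_group le sp"
    and "sp 0 u" "le 0 v1" "sp 0 v2" "le u (v1 + v2)"
  defines "m \<equiv> mixed_lower le sp u v1"
  shows "le 0 m" "le m v1" "sp 0 (u - m)" "le (u - m) v2"
proof -
  note le = mixed_lattice_group_orders(1)[OF G] and sp = mixed_lattice_group_orders(2)[OF G]
  have m: "sp m u" "le m v1" "\<And>z. sp z u \<Longrightarrow> le z v1 \<Longrightarrow> le z m"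
    using is_mixed_lower_mixed_lower[OF G, of u v1] unfolding m_def is_mixed_lower_def by blast+
  show "le 0 m" using m(3) assms(2,3) by blast
  show "le m v1" by (fact m(2))
  show "sp 0 (u - m)" using inv_partial_order_translate[OF sp m(1)] by simp
  have "sp (u - v2) u" using inv_partial_order_translate[OF sp assms(4)] by simp
  moreover have "le (u - v2) v1"
    using inv_partial_order_translate[OF le assms(5)] by (simp add: algebra_simps)
  ultimately have "le (u - v2) m" using m(3) by blast
  then show "le (u - m) v2" using inv_partial_order_translate[OF le] by (simp add: algebra_simps)
qed

lemma riesz_decomposition_le_remainder_sp:
  assumes Q: "quasi_regular le sp" and "sp 0 v2" "sp u (v1 + v2)"
  shows "sp (u - mixed_lower le sp u v1) v2"
proof -
  have G: "mixed_lattice_group le sp" using Q unfolding quasi_regular_def by blast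
  note sp = mixed_lattice_group_orders(2)[OF G]
  have "sp 0 (v1 + v2 - u)" using inv_partial_order_translate[OF sp assms(3)] by simp
  then have "sp 0 (mixed_lower le sp v2 (v1 + v2 - u))"
    using quasi_regular_sp_nonneg_mixed_lower[OF Q assms(2)] by blast
  moreover have "mixed_lower le sp v2 (v1 + v2 - u) = mixed_lower le sp u v1 + (v2 - u)"
    using mixed_lower_translate[OF G, of u "v2 - u" v1] by (simp add: algebra_simps)
  ultimately show ?thesis using inv_partial_order_translate[OF sp] by (simp add: algebra_simps)
qed

lemma riesz_decomposition_sp:
  assumes G: "mixed_lattice_group le sp"
    and "le 0 u" "sp 0 v1" "le 0 v2" "sp u (v1 + v2)"
  defines "m \<equiv> mixed_lower le sp v1 u"
  shows "le 0 m" "sp m v1" "le 0 (u - m)" "le (u - m) v2"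
proof -
  note le = mixed_lattice_group_orders(1)[OF G] and sp = mixed_lattice_group_orders(2)[OF G]
  have m: "sp m v1" "le m u" "\<And>z. sp z v1 \<Longrightarrow> le z u \<Longrightarrow> le z m"
    using is_mixed_lower_mixed_lower[OF G, of v1 u] unfolding m_def is_mixed_lower_def by blast+
  show "le 0 m" using m(3) assms(2,3) by blast
  show "sp m v1" by (fact m(1))
  show "le 0 (u - m)" using inv_partial_order_translate[OF le m(2)] by simp
  have "sp (u - v2) v1"
    using inv_partial_order_translate[OF sp assms(5)] by (simp add: algebra_simps)
  moreover have "le (u - v2) u" using inv_partial_order_translate[OF le assms(4)] by simp
  ultimately have "le (u - v2) m" using m(3) by blast
  then show "le (u - m) v2" using inv_partial_order_translate[OF le] by (simp add: algebra_simps)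
qed

theorem theorem3p9:
  fixes le sp :: "'a::ab_group_add \<Rightarrow> 'a \<Rightarrow> bool"
  assumes "quasi_regular le sp"
  shows "(\<forall>u v1 v2. sp 0 u \<and> le 0 v1 \<and> sp 0 v2 \<and> le u (v1 + v2) \<longrightarrow>
            (\<exists>u1 u2. le 0 u1 \<and> le u1 v1 \<and> sp 0 u2 \<and> le u2 v2 \<and> u = u1 + u2 \<and>
                     (sp 0 v1 \<longrightarrow> sp 0 u1) \<and> (sp u (v1 + v2) \<longrightarrow> sp u2 v2)))
       \<and> (\<forall>u v1 v2. le 0 u \<and> sp 0 v1 \<and> le 0 v2 \<and> sp u (v1 + v2) \<longrightarrow>
            (\<exists>u1 u2. le 0 u1 \<and> sp u1 v1 \<and> le 0 u2 \<and> le u2 v2 \<and> u = u1 + u2 \<and>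
                     (sp 0 u \<longrightarrow> sp 0 u1)))"
proof (intro conjI allI impI)
  have G: "mixed_lattice_group le sp" using assms unfolding quasi_regular_def by blast
  fix u v1 v2
  {
    assume h: "sp 0 u \<and> le 0 v1 \<and> sp 0 v2 \<and> le u (v1 + v2)"
    let ?m = "mixed_lower le sp u v1"
    show "\<exists>u1 u2. le 0 u1 \<and> le u1 v1 \<and> sp 0 u2 \<and> le u2 v2 \<and> u = u1 + u2 \<and>
                  (sp 0 v1 \<longrightarrow> sp 0 u1) \<and> (sp u (v1 + v2) \<longrightarrow> sp u2 v2)"
      using riesz_decomposition_le[OF G] riesz_decomposition_le_remainder_sp[OF assms]
        quasi_regular_sp_nonneg_mixed_lower[OF assms] h
      by (intro exI[of _ ?m] exI[of _ "u - ?m"]) auto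
  next
    assume h: "le 0 u \<and> sp 0 v1 \<and> le 0 v2 \<and> sp u (v1 + v2)"
    let ?m = "mixed_lower le sp v1 u"
    show "\<exists>u1 u2. le 0 u1 \<and> sp u1 v1 \<and> le 0 u2 \<and> le u2 v2 \<and> u = u1 + u2 \<and>
                  (sp 0 u \<longrightarrow> sp 0 u1)"
      using riesz_decomposition_sp[OF G] quasi_regular_sp_nonneg_mixed_lower[OF assms] h
      by (intro exI[of _ ?m] exI[of _ "u - ?m"]) auto
  }
qed

end
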